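(* Let $M\ge 1$ be an integer (the number of end-to-end spatial subchannels, $M=KN$), let $\mathcal{P}_{\rm S}>0$ and $\mathcal{P}_{\rm R}>0$ be the total transmit powers available at the source and at the relay, and let $g_{1,1},\dots,g_{1,M}>0$ and $g_{2,1},\dots,g_{2,M}>0$ be the noise-normalized channel gains of the subchannels over hop 1 and hop 2, respectively (i.e. $g_{1,n}=\lambda_{1,n}/\sigma_{\rm R}^2$, $g_{2,n'}=\lambda_{2,n'}/\sigma_{\rm D}^2$). Let $c>0$ be a constant. Consider the problem $$\max_{\theta,\mu,\overline{\mu}}\ \sum_{n=1}^{M}\sum_{n'=1}^{M}\theta_{n,n'}\, c\,\min\Big(\log_2\big(1+\mathcal{P}_{\rm S}\mu_n g_{1,n}\big),\ \log_2\big(1+\mathcal{P}_{\rm R}\overline{\mu}_{n'} g_{2,n'}\big)\Big)$$ subject to $\sum_{n=1}^M\mu_n\le 1$, $\sum_{n'=1}^M\overline{\mu}_{n'}\le 1$, $\mu_n\ge 0$, $\overline{\mu}_{n'}\ge0$, $\theta_{n,n'}\in\{0,1\}$, $\sum_{n=1}^M\theta_{n,n'}=1$ for every $n'$ and $\sum_{n'=1}^M\theta_{n,n'}=1$ for every $n$. Then the optimal subchannel pairing is the sorted pairing: there is an optimal solution in which, for each $i=1,\dots,M$, the hop-1 subchannel with the $i$-th largest gain $g_{1,n}$ is paired (i.e. $\theta_{n,n'}=1$) with the hop-2 subchannel with the $i$-th largest gain $g_{2,n'}$.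
   Context: Setting: a half-duplex two-hop decode-and-forward MIMO-OFDM relaying system (source S, energy-harvesting relay R, destination D) where, after SVD precoding/filtering, each hop is decomposed into $M=KN$ parallel independent subchannels ($K$ OFDM subcarriers, $N=\min\{N_{\rm S},N_{\rm R},N_{\rm D}\}$ spatial subchannels per subcarrier), with $\lambda_{i,n}$ the squared nonzero singular values of the hop-$i$ channel matrices and $\sigma_{\rm R}^2,\sigma_{\rm D}^2$ the noise powers at R and D. The variable $\theta_{n,n'}=1$ means hop-1 subchannel $n$ is paired with hop-2 subchannel $n'$; $\mu_n$ and $\overline{\mu}_{n'}$ are power allocation fractions at S and R. The rate of a pair is the minimum of the two hop rates, and $c=\frac{(1-\alpha)\mathfrak{B}}{2K}$ for a fixed time-switching factor $\alpha\in[0,1)$ and bandwidth $\mathfrak{B}$. *)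

theory Defs
  imports Complex_Main
begin

text \<open>Subchannels are indexed by 1..M. theta, mu, mub are functions on indices;
  only their values on 1..M matter.\<close>

definition pair_rate :: "real \<Rightarrow> real \<Rightarrow> real \<Rightarrow> real \<Rightarrow> real \<Rightarrow> real \<Rightarrow> real \<Rightarrow> real" where
  "pair_rate c PS PR g1n g2n' mun mubn' =
     c * min (log 2 (1 + PS * mun * g1n)) (log 2 (1 + PR * mubn' * g2n'))"

definition objective ::
  "nat \<Rightarrow> real \<Rightarrow> real \<Rightarrow> real \<Rightarrow> (nat \<Rightarrow> real) \<Rightarrow> (nat \<Rightarrow> real)
   \<Rightarrow> (nat \<Rightarrow> nat \<Rightarrow> real) \<Rightarrow> (nat \<Rightarrow> real) \<Rightarrow> (nat \<Rightarrow> real) \<Rightarrow> real" where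
  "objective M c PS PR g1 g2 \<theta> \<mu> \<mu>b =
     (\<Sum>n=1..M. \<Sum>n'=1..M. \<theta> n n' * pair_rate c PS PR (g1 n) (g2 n') (\<mu> n) (\<mu>b n'))"

definition feasible :: "nat \<Rightarrow> (nat \<Rightarrow> nat \<Rightarrow> real) \<Rightarrow> (nat \<Rightarrow> real) \<Rightarrow> (nat \<Rightarrow> real) \<Rightarrow> bool" where
  "feasible M \<theta> \<mu> \<mu>b \<longleftrightarrow>
     (\<Sum>n=1..M. \<mu> n) \<le> 1 \<and> (\<Sum>n'=1..M. \<mu>b n') \<le> 1 \<and>
     (\<forall>n\<in>{1..M}. \<mu> n \<ge> 0) \<and> (\<forall>n'\<in>{1..M}. \<mu>b n' \<ge> 0) \<and>
     (\<forall>n\<in>{1..M}. \<forall>n'\<in>{1..M}. \<theta> n n' \<in> {0, 1}) \<and>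
     (\<forall>n'\<in>{1..M}. (\<Sum>n=1..M. \<theta> n n') = 1) \<and>
     (\<forall>n\<in>{1..M}. (\<Sum>n'=1..M. \<theta> n n') = 1)"

definition optimal ::
  "nat \<Rightarrow> real \<Rightarrow> real \<Rightarrow> real \<Rightarrow> (nat \<Rightarrow> real) \<Rightarrow> (nat \<Rightarrow> real)
   \<Rightarrow> (nat \<Rightarrow> nat \<Rightarrow> real) \<Rightarrow> (nat \<Rightarrow> real) \<Rightarrow> (nat \<Rightarrow> real) \<Rightarrow> bool" where
  "optimal M c PS PR g1 g2 \<theta> \<mu> \<mu>b \<longleftrightarrow>
     feasible M \<theta> \<mu> \<mu>b \<and>
     (\<forall>\<theta>' \<mu>' \<mu>b'. feasible M \<theta>' \<mu>' \<mu>b' \<longrightarrow>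
        objective M c PS PR g1 g2 \<theta>' \<mu>' \<mu>b' \<le> objective M c PS PR g1 g2 \<theta> \<mu> \<mu>b)"

definition decreasing_ranking :: "nat \<Rightarrow> (nat \<Rightarrow> real) \<Rightarrow> (nat \<Rightarrow> nat) \<Rightarrow> bool" where
  "decreasing_ranking M g \<sigma> \<longleftrightarrow>
     bij_betw \<sigma> {1..M} {1..M} \<and>
     (\<forall>i\<in>{1..M}. \<forall>j\<in>{1..M}. i \<le> j \<longrightarrow> g (\<sigma> j) \<le> g (\<sigma> i))"

definition sorted_pairing :: "nat \<Rightarrow> (nat \<Rightarrow> real) \<Rightarrow> (nat \<Rightarrow> real) \<Rightarrow> (nat \<Rightarrow> nat \<Rightarrow> real) \<Rightarrow> bool" where
  "sorted_pairing M g1 g2 \<theta> \<longleftrightarrow>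
     (\<exists>\<sigma>1 \<sigma>2. decreasing_ranking M g1 \<sigma>1 \<and> decreasing_ranking M g2 \<sigma>2 \<and>
        (\<forall>i\<in>{1..M}. \<theta> (\<sigma>1 i) (\<sigma>2 i) = 1))"

end

theory Submission
  imports Defs "HOL-Analysis.Analysis"
begin

text \<open>
  Any feasible point pairs the subchannels by a permutation pi, and its rate is the sum of
  c log2 (1 + s n), where s n is the smaller of the two received SNRs of the pair (n, pi n).
  Realising these SNRs costs the power fractions s n / (PS g1 n) at the source and
  s n / (PR g2 (pi n)) at the relay. Handing the k-th largest SNR to the k-th sorted pair keeps
  the rate, and by the rearrangement inequality (large SNRs against small inverse gains) needs
  no more power on either hop. Hence the sorted pairing achieves every feasible rate, and a
  power allocation maximising the objective for it, which exists by compactness, is optimal.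
\<close>

lemma rearrangement_inequality:
  fixes x y :: "nat \<Rightarrow> 'a :: linordered_idom"
  assumes "\<And>i j. i \<in> {1..n} \<Longrightarrow> j \<in> {1..n} \<Longrightarrow> i \<le> j \<Longrightarrow> x j \<le> x i \<and> y i \<le> y j"
    and "bij_betw f {1..n} {1..n}"
  shows "(\<Sum>i=1..n. x i * y i) \<le> (\<Sum>i=1..n. x i * y (f i))"
  using assms
proof (induction n arbitrary: f)
  case 0
  then show ?case by simp
next
  case (Suc n)
  let ?N = "Suc n" and ?A = "{1..Suc n}"
  have "?N \<in> f ` ?A"
    using Suc.prems(2) by (simp add: bij_betw_def)
  then obtain j where j: "j \<in> ?A" "f j = ?N"
    by auto
  define f' where "f' = Fun.swap j ?N f"
  have f'_bij: "bij_betw f' ?A ?A"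
    unfolding f'_def using Suc.prems(2) j(1) by (simp add: bij_betw_swap_iff)
  have f'_N: "f' ?N = ?N"
    using j by (simp add: f'_def)
  have "bij_betw f' (?A - {?N}) (?A - {?N})"
    using f'_bij f'_N by (intro bij_betw_DiffI) auto
  then have "bij_betw f' {1..n} {1..n}"
    by (simp add: atLeastAtMostSuc_conv)
  then have IH: "(\<Sum>i=1..n. x i * y i) \<le> (\<Sum>i=1..n. x i * y (f' i))"
    using Suc.IH Suc.prems(1) by simp
  have swap_gain: "(\<Sum>i\<in>?A. x i * y (f i) - x i * y (f' i)) = (x j - x ?N) * (y ?N - y (f ?N))"
  proof (cases "j = ?N")
    case True
    then show ?thesis by (simp add: f'_def j)
  next
    case False
    have "(\<Sum>i\<in>?A. x i * y (f i) - x i * y (f' i)) = (\<Sum>i\<in>{j, ?N}. x i * y (f i) - x i * y (f' i))"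
      using j by (intro sum.mono_neutral_right) (auto simp: f'_def transpose_apply_other)
    then show ?thesis
      using False j by (simp add: f'_def algebra_simps)
  qed
  have "0 \<le> (x j - x ?N) * (y ?N - y (f ?N))"
    using Suc.prems j bij_betwE[OF Suc.prems(2)] by (simp add: mult_nonneg_nonneg)
  then have "(\<Sum>i\<in>?A. x i * y (f' i)) \<le> (\<Sum>i\<in>?A. x i * y (f i))"
    using swap_gain by (simp add: sum_subtractf)
  moreover have "(\<Sum>i\<in>?A. x i * y i) \<le> (\<Sum>i\<in>?A. x i * y (f' i))"
    using IH f'_N by simp
  ultimately show ?case
    by order
qed

lemma decreasing_ranking_exists: "\<exists>\<sigma>. decreasing_ranking M g \<sigma>"
proof -
  define xs where "xs = sort_key (\<lambda>n. - g n) [1..<M+1]"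
  have len: "length xs = M" and dist: "distinct xs" and set_xs: "set xs = {1..M}"
    and sorted_xs: "sorted (map (\<lambda>n. - g n) xs)"
    by (auto simp: xs_def)
  define \<sigma> where "\<sigma> i = xs ! (i - 1)" for i
  have "bij_betw (\<lambda>i. xs ! i) {..<M} {1..M}"
    using bij_betw_nth[OF dist] len set_xs by (simp add: lessThan_atLeast0)
  moreover have "bij_betw (\<lambda>i. i - 1) {1..M} {..<M}"
    by (rule bij_betw_byWitness[where f' = Suc]) auto
  ultimately have "bij_betw \<sigma> {1..M} {1..M}"
    unfolding \<sigma>_def using bij_betw_trans by (fastforce simp: comp_def)
  moreover have "g (\<sigma> j) \<le> g (\<sigma> i)" if "i \<in> {1..M}" "j \<in> {1..M}" "i \<le> j" for i j
    using sorted_nth_mono[OF sorted_xs, of "i - 1" "j - 1"] that len by (simp add: \<sigma>_def)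
  ultimately show ?thesis
    unfolding decreasing_ranking_def by blast
qed

definition pairing_of :: "(nat \<Rightarrow> nat) \<Rightarrow> nat \<Rightarrow> nat \<Rightarrow> real" where
  "pairing_of \<pi> n n' = (if n' = \<pi> n then 1 else 0)"

lemma unique_one_if_zero_one_sum_eq_one:
  fixes h :: "'a \<Rightarrow> real"
  assumes "finite B" and "\<forall>b\<in>B. h b \<in> {0, 1}" and "sum h B = 1"
  shows "\<exists>!b. b \<in> B \<and> h b = 1"
proof -
  have "sum h B = (\<Sum>b\<in>B. if h b = 1 then 1 else 0)"
    using assms(2) by (intro sum.cong) auto
  also have "\<dots> = (\<Sum>b\<in>{b\<in>B. h b = 1}. 1)"
    by (rule sum.inter_filter[OF assms(1), symmetric])
  finally have "card {b\<in>B. h b = 1} = 1"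
    using assms(3) by simp
  then obtain b where "{b\<in>B. h b = 1} = {b}"
    by (rule card_1_singletonE)
  then show ?thesis
    by (intro ex1I[of _ b]) auto
qed

lemma assignment_matrix_is_pairing:
  assumes fin: "finite A" and zero_one: "\<forall>n\<in>A. \<forall>n'\<in>A. \<theta> n n' \<in> {0, 1}"
    and col: "\<forall>n'\<in>A. (\<Sum>n\<in>A. \<theta> n n') = 1" and row: "\<forall>n\<in>A. (\<Sum>n'\<in>A. \<theta> n n') = 1"
  obtains \<pi> where "bij_betw \<pi> A A" and "\<forall>n\<in>A. \<forall>n'\<in>A. \<theta> n n' = pairing_of \<pi> n n'"
proof
  have row_unique: "\<exists>!n'. n' \<in> A \<and> \<theta> n n' = 1" if "n \<in> A" for n
    using that zero_one row by (intro unique_one_if_zero_one_sum_eq_one[OF fin]) auto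
  have col_unique: "\<exists>!n. n \<in> A \<and> \<theta> n n' = 1" if "n' \<in> A" for n'
    using that zero_one col by (intro unique_one_if_zero_one_sum_eq_one[OF fin]) auto
  define \<pi> where "\<pi> n = (THE n'. n' \<in> A \<and> \<theta> n n' = 1)" for n
  have \<pi>: "\<pi> n \<in> A \<and> \<theta> n (\<pi> n) = 1" if "n \<in> A" for n
    unfolding \<pi>_def using theI'[OF row_unique[OF that]] .
  show "\<forall>n\<in>A. \<forall>n'\<in>A. \<theta> n n' = pairing_of \<pi> n n'"
  proof (intro ballI)
    fix n n' assume nn': "n \<in> A" "n' \<in> A"
    then have "\<theta> n n' = 1 \<longleftrightarrow> n' = \<pi> n"
      using \<pi> row_unique by blast
    then show "\<theta> n n' = pairing_of \<pi> n n'"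
      using zero_one nn' by (auto simp: pairing_of_def)
  qed
  have "inj_on \<pi> A"
  proof (rule inj_onI)
    fix a b assume "a \<in> A" "b \<in> A" "\<pi> a = \<pi> b"
    then show "a = b"
      using \<pi> col_unique[of "\<pi> b"] by metis
  qed
  moreover have "\<pi> ` A \<subseteq> A"
    using \<pi> by blast
  ultimately show "bij_betw \<pi> A A"
    by (simp add: bij_betw_def endo_inj_surj[OF fin])
qed

lemma pairing_of_column_sum:
  assumes "finite A" "bij_betw \<pi> A A" "n' \<in> A"
  shows "(\<Sum>n\<in>A. pairing_of \<pi> n n') = 1"
proof -
  have "(\<Sum>n\<in>A. pairing_of \<pi> n n') = (\<Sum>m\<in>A. if n' = m then 1 else 0)"
    unfolding pairing_of_def by (rule sum.reindex_bij_betw[OF assms(2)])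
  then show ?thesis
    using assms by simp
qed

lemma objective_eq_pairing_sum:
  assumes "\<forall>n\<in>{1..M}. \<forall>n'\<in>{1..M}. \<theta> n n' = pairing_of \<pi> n n'" and "\<forall>n\<in>{1..M}. \<pi> n \<in> {1..M}"
  shows "objective M c PS PR g1 g2 \<theta> \<mu> \<mu>b =
    (\<Sum>n=1..M. pair_rate c PS PR (g1 n) (g2 (\<pi> n)) (\<mu> n) (\<mu>b (\<pi> n)))"
  unfolding objective_def
proof (rule sum.cong[OF refl])
  fix n assume n: "n \<in> {1..M}"
  have "(\<Sum>n'=1..M. \<theta> n n' * pair_rate c PS PR (g1 n) (g2 n') (\<mu> n) (\<mu>b n'))
      = (\<Sum>n'=1..M. if n' = \<pi> n then pair_rate c PS PR (g1 n) (g2 n') (\<mu> n) (\<mu>b n') else 0)"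
    using assms(1) n by (intro sum.cong) (auto simp: pairing_of_def)
  also have "\<dots> = pair_rate c PS PR (g1 n) (g2 (\<pi> n)) (\<mu> n) (\<mu>b (\<pi> n))"
    using assms(2) n by (simp add: sum.delta')
  finally show "(\<Sum>n'=1..M. \<theta> n n' * pair_rate c PS PR (g1 n) (g2 n') (\<mu> n) (\<mu>b n'))
      = pair_rate c PS PR (g1 n) (g2 (\<pi> n)) (\<mu> n) (\<mu>b (\<pi> n))" .
qed

lemma pair_rate_eq_log_min:
  assumes "0 \<le> PS * m * g" and "0 \<le> PR * m' * g'"
  shows "pair_rate c PS PR g g' m m' = c * log 2 (1 + min (PS * m * g) (PR * m' * g'))"
  using assms unfolding pair_rate_def by (cases "PS * m * g \<le> PR * m' * g'") (simp_all add: min_def)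

text \<open>Coordinates outside 1..M are pinned to 0, which makes the set compact in the product topology.\<close>
definition allocations :: "nat \<Rightarrow> (nat \<Rightarrow> real) set" where
  "allocations M =
     {\<mu>. (\<forall>n\<in>{1..M}. 0 \<le> \<mu> n) \<and> (\<forall>n. n \<notin> {1..M} \<longrightarrow> \<mu> n = 0) \<and> (\<Sum>n=1..M. \<mu> n) \<le> 1}"

lemma compact_allocations: "compact (allocations M)"
proof -
  let ?box = "PiE UNIV (\<lambda>n. if n \<in> {1..M} then {0..1::real} else {0})"
  have "compactin (product_topology (\<lambda>_. euclidean) UNIV) ?box"
    by (subst compactin_PiE) auto
  then have box_compact: "compact ?box"
    by (simp add: euclidean_product_topology)
  have "continuous_on UNIV (\<lambda>\<mu>::nat\<Rightarrow>real. \<Sum>n=1..M. \<mu> n)"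
    by (intro continuous_intros) simp
  then have budget_closed: "closed {\<mu>::nat\<Rightarrow>real. (\<Sum>n=1..M. \<mu> n) \<le> 1}"
    using closed_Collect_le[of "\<lambda>\<mu>. \<Sum>n=1..M. \<mu> n" "\<lambda>_. 1"] by simp
  have le_one: "\<mu> n \<le> 1" if "\<mu> \<in> allocations M" "n \<in> {1..M}" for \<mu> n
    using that member_le_sum[of n "{1..M}" \<mu>] by (auto simp: allocations_def)
  then have "allocations M = ?box \<inter> {\<mu>. (\<Sum>n=1..M. \<mu> n) \<le> 1}"
    by (auto simp: allocations_def PiE_UNIV_domain Pi_iff split: if_splits)
  then show ?thesis
    using compact_Int_closed[OF box_compact budget_closed] by simp
qed

lemma continuous_on_objective:
  assumes "PS > 0" "PR > 0" "\<forall>n\<in>{1..M}. g1 n > 0" "\<forall>n\<in>{1..M}. g2 n > 0"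
  shows "continuous_on (allocations M \<times> allocations M)
           (\<lambda>p. objective M c PS PR g1 g2 \<theta> (fst p) (snd p))"
  unfolding objective_def pair_rate_def
proof (intro continuous_intros ballI)
  fix n n' p assume "n \<in> {1..M}" "n' \<in> {1..M}" "p \<in> allocations M \<times> allocations M"
  then have "0 \<le> PS * fst p n * g1 n" "0 \<le> PR * snd p n' * g2 n'"
    using assms by (auto simp: allocations_def less_imp_le)
  then show "1 + PS * fst p n * g1 n \<noteq> 0" "1 + PR * snd p n' * g2 n' \<noteq> 0"
    by linarith+
next
  fix n
  show "continuous_on (allocations M \<times> allocations M) (\<lambda>p. fst p n)"
    by (rule continuous_on_compose2[OF continuous_on_product_coordinates continuous_on_fst[OF continuous_on_id]]) auto
  show "continuous_on (allocations M \<times> allocations M) (\<lambda>p. snd p n)"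
    by (rule continuous_on_compose2[OF continuous_on_product_coordinates continuous_on_snd[OF continuous_on_id]]) auto
qed auto

lemma optimal_allocation_exists:
  assumes "PS > 0" "PR > 0" "\<forall>n\<in>{1..M}. g1 n > 0" "\<forall>n\<in>{1..M}. g2 n > 0"
  obtains \<mu> \<mu>b where "\<mu> \<in> allocations M" "\<mu>b \<in> allocations M"
    and "\<And>\<mu>' \<mu>b'. \<mu>' \<in> allocations M \<Longrightarrow> \<mu>b' \<in> allocations M \<Longrightarrow>
           objective M c PS PR g1 g2 \<theta> \<mu>' \<mu>b' \<le> objective M c PS PR g1 g2 \<theta> \<mu> \<mu>b"
proof -
  have "(\<lambda>_. 0, \<lambda>_. 0) \<in> allocations M \<times> allocations M"
    by (simp add: allocations_def)
  then obtain p where "p \<in> allocations M \<times> allocations M"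
    and "\<forall>q\<in>allocations M \<times> allocations M.
           objective M c PS PR g1 g2 \<theta> (fst q) (snd q) \<le> objective M c PS PR g1 g2 \<theta> (fst p) (snd p)"
    using continuous_attains_sup[OF compact_Times[OF compact_allocations compact_allocations] _
        continuous_on_objective[OF assms]] by blast
  then show ?thesis
    using that[of "fst p" "snd p"] by force
qed

lemma decreasing_ranking_scale:
  assumes "decreasing_ranking M g \<sigma>" and "P > 0"
  shows "decreasing_ranking M (\<lambda>n. P * g n) \<sigma>"
  using assms by (simp add: decreasing_ranking_def)

lemma sorted_assignment_cost_le:
  fixes s g :: "nat \<Rightarrow> real"
  assumes \<sigma>: "decreasing_ranking M g \<sigma>" and \<tau>: "decreasing_ranking M s \<tau>"
    and q: "bij_betw q {1..M} {1..M}" and g_pos: "\<forall>n\<in>{1..M}. g n > 0"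
  shows "(\<Sum>i=1..M. s (\<tau> i) / g (\<sigma> i)) \<le> (\<Sum>n=1..M. s n / g (q n))"
proof -
  let ?A = "{1..M}"
  have \<sigma>_bij: "bij_betw \<sigma> ?A ?A" and \<tau>_bij: "bij_betw \<tau> ?A ?A"
    using \<sigma> \<tau> by (simp_all add: decreasing_ranking_def)
  define f where "f = inv_into ?A \<sigma> \<circ> q \<circ> \<tau>"
  have f_bij: "bij_betw f ?A ?A"
    unfolding f_def using bij_betw_trans[OF bij_betw_trans[OF \<tau>_bij q] bij_betw_inv_into[OF \<sigma>_bij]]
    by (simp add: comp_assoc)
  have \<sigma>_f: "\<sigma> (f i) = q (\<tau> i)" if "i \<in> ?A" for i
    using that bij_betwE[OF q] bij_betwE[OF \<tau>_bij] \<sigma>_bij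
    by (simp add: f_def bij_betw_inv_into_right)
  have "(\<Sum>i\<in>?A. s (\<tau> i) * (1 / g (\<sigma> i))) \<le> (\<Sum>i\<in>?A. s (\<tau> i) * (1 / g (\<sigma> (f i))))"
  proof (rule rearrangement_inequality[OF _ f_bij])
    fix i j assume ij: "i \<in> ?A" "j \<in> ?A" "i \<le> j"
    then have "0 < g (\<sigma> j)" "g (\<sigma> j) \<le> g (\<sigma> i)"
      using g_pos bij_betwE[OF \<sigma>_bij] \<sigma> by (auto simp: decreasing_ranking_def)
    then show "s (\<tau> j) \<le> s (\<tau> i) \<and> 1 / g (\<sigma> i) \<le> 1 / g (\<sigma> j)"
      using \<tau> ij by (auto simp: decreasing_ranking_def frac_le)
  qed
  also have "\<dots> = (\<Sum>i\<in>?A. s (\<tau> i) * (1 / g (q (\<tau> i))))"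
    by (simp add: \<sigma>_f)
  also have "\<dots> = (\<Sum>n\<in>?A. s n * (1 / g (q n)))"
    by (rule sum.reindex_bij_betw[OF \<tau>_bij])
  finally show ?thesis
    by simp
qed

definition snr_feasible ::
  "nat \<Rightarrow> real \<Rightarrow> real \<Rightarrow> (nat \<Rightarrow> real) \<Rightarrow> (nat \<Rightarrow> real) \<Rightarrow> (nat \<Rightarrow> nat) \<Rightarrow> (nat \<Rightarrow> real) \<Rightarrow> bool" where
  "snr_feasible M PS PR g1 g2 \<pi> s \<longleftrightarrow>
     (\<forall>n\<in>{1..M}. 0 \<le> s n) \<and>
     (\<Sum>n=1..M. s n / (PS * g1 n)) \<le> 1 \<and> (\<Sum>n=1..M. s n / (PR * g2 (\<pi> n))) \<le> 1"

lemma feasible_imp_snr_feasible: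
  assumes feas: "feasible M \<theta> \<mu> \<mu>b" and PS: "PS > 0" and PR: "PR > 0"
    and g1_pos: "\<forall>n\<in>{1..M}. g1 n > 0" and g2_pos: "\<forall>n\<in>{1..M}. g2 n > 0"
  obtains \<pi> s where "bij_betw \<pi> {1..M} {1..M}" and "snr_feasible M PS PR g1 g2 \<pi> s"
    and "objective M c PS PR g1 g2 \<theta> \<mu> \<mu>b = (\<Sum>n=1..M. c * log 2 (1 + s n))"
proof -
  let ?A = "{1..M}"
  obtain \<pi> where \<pi>_bij: "bij_betw \<pi> ?A ?A" and \<theta>: "\<forall>n\<in>?A. \<forall>n'\<in>?A. \<theta> n n' = pairing_of \<pi> n n'"
    using assignment_matrix_is_pairing[of ?A \<theta>] feas unfolding feasible_def by auto
  have \<pi>_A: "\<forall>n\<in>?A. \<pi> n \<in> ?A"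
    using bij_betwE[OF \<pi>_bij] .
  define s where "s n = min (PS * \<mu> n * g1 n) (PR * \<mu>b (\<pi> n) * g2 (\<pi> n))" for n
  have nonneg: "0 \<le> PS * \<mu> n * g1 n" "0 \<le> PR * \<mu>b (\<pi> n) * g2 (\<pi> n)" if "n \<in> ?A" for n
    using that feas PS PR g1_pos g2_pos \<pi>_A by (auto simp: feasible_def less_imp_le)
  have "(\<Sum>n\<in>?A. s n / (PS * g1 n)) \<le> (\<Sum>n\<in>?A. \<mu> n)"
    using PS g1_pos by (intro sum_mono) (auto simp: s_def divide_le_eq ac_simps)
  moreover have "(\<Sum>n\<in>?A. s n / (PR * g2 (\<pi> n))) \<le> (\<Sum>n\<in>?A. \<mu>b (\<pi> n))"
    using PR g2_pos \<pi>_A by (intro sum_mono) (auto simp: s_def divide_le_eq ac_simps)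
  moreover have "(\<Sum>n\<in>?A. \<mu>b (\<pi> n)) = (\<Sum>n\<in>?A. \<mu>b n)"
    by (rule sum.reindex_bij_betw[OF \<pi>_bij])
  ultimately have "snr_feasible M PS PR g1 g2 \<pi> s"
    using feas nonneg unfolding snr_feasible_def feasible_def s_def by auto
  moreover have "objective M c PS PR g1 g2 \<theta> \<mu> \<mu>b = (\<Sum>n\<in>?A. c * log 2 (1 + s n))"
    using nonneg by (simp add: objective_eq_pairing_sum[OF \<theta> \<pi>_A] pair_rate_eq_log_min s_def)
  ultimately show ?thesis
    using that \<pi>_bij by blast
qed

lemma snr_feasible_imp_allocation:
  assumes \<pi>_bij: "bij_betw \<pi> {1..M} {1..M}" and s: "snr_feasible M PS PR g1 g2 \<pi> s"
    and PS: "PS > 0" and PR: "PR > 0"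
    and g1_pos: "\<forall>n\<in>{1..M}. g1 n > 0" and g2_pos: "\<forall>n\<in>{1..M}. g2 n > 0"
  obtains \<mu> \<mu>b where "\<mu> \<in> allocations M" and "\<mu>b \<in> allocations M"
    and "objective M c PS PR g1 g2 (pairing_of \<pi>) \<mu> \<mu>b = (\<Sum>n=1..M. c * log 2 (1 + s n))"
proof -
  let ?A = "{1..M}"
  define \<iota> where "\<iota> = inv_into ?A \<pi>"
  have \<pi>_A: "\<forall>n\<in>?A. \<pi> n \<in> ?A"
    using bij_betwE[OF \<pi>_bij] .
  have \<iota>_\<pi>: "\<iota> (\<pi> n) = n" if "n \<in> ?A" for n
    using \<pi>_bij that by (simp add: \<iota>_def bij_betw_inv_into_left)
  define \<mu> where "\<mu> n = (if n \<in> ?A then s n / (PS * g1 n) else 0)" for n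
  define \<mu>b where "\<mu>b n = (if n \<in> ?A then s (\<iota> n) / (PR * g2 n) else 0)" for n
  have "(\<Sum>n\<in>?A. \<mu> n) = (\<Sum>n\<in>?A. s n / (PS * g1 n))"
    by (simp add: \<mu>_def)
  then have \<mu>_alloc: "\<mu> \<in> allocations M"
    using s PS g1_pos by (auto simp: allocations_def snr_feasible_def \<mu>_def)
  have "(\<Sum>n\<in>?A. \<mu>b n) = (\<Sum>n\<in>?A. s (\<iota> n) / (PR * g2 n))"
    by (simp add: \<mu>b_def)
  also have "\<dots> = (\<Sum>n\<in>?A. s (\<iota> (\<pi> n)) / (PR * g2 (\<pi> n)))"
    by (rule sum.reindex_bij_betw[OF \<pi>_bij, symmetric])
  also have "\<dots> = (\<Sum>n\<in>?A. s n / (PR * g2 (\<pi> n)))"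
    using \<iota>_\<pi> by simp
  finally have \<mu>b_alloc: "\<mu>b \<in> allocations M"
    using s PR g2_pos bij_betwE[OF bij_betw_inv_into[OF \<pi>_bij]]
    by (auto simp: allocations_def snr_feasible_def \<mu>b_def \<iota>_def)
  have "PS * \<mu> n * g1 n = s n" "PR * \<mu>b (\<pi> n) * g2 (\<pi> n) = s n" if "n \<in> ?A" for n
  proof -
    have "g1 n > 0" "g2 (\<pi> n) > 0" "\<pi> n \<in> ?A"
      using that g1_pos g2_pos \<pi>_A by auto
    then show "PS * \<mu> n * g1 n = s n" "PR * \<mu>b (\<pi> n) * g2 (\<pi> n) = s n"
      using that PS PR \<iota>_\<pi> by (simp_all add: \<mu>_def \<mu>b_def)
  qed
  then have "objective M c PS PR g1 g2 (pairing_of \<pi>) \<mu> \<mu>b = (\<Sum>n\<in>?A. c * log 2 (1 + s n))"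
    using objective_eq_pairing_sum[of M "pairing_of \<pi>" \<pi>] \<pi>_A s
    by (simp add: pair_rate_def snr_feasible_def)
  then show ?thesis
    using that \<mu>_alloc \<mu>b_alloc by blast
qed

lemma snr_feasible_sorted_pairing:
  assumes \<sigma>1: "decreasing_ranking M g1 \<sigma>1" and \<sigma>2: "decreasing_ranking M g2 \<sigma>2"
    and \<tau>: "decreasing_ranking M s \<tau>"
    and \<pi>_bij: "bij_betw \<pi> {1..M} {1..M}" and s: "snr_feasible M PS PR g1 g2 \<pi> s"
    and PS: "PS > 0" and PR: "PR > 0"
    and g1_pos: "\<forall>n\<in>{1..M}. g1 n > 0" and g2_pos: "\<forall>n\<in>{1..M}. g2 n > 0"
  shows "snr_feasible M PS PR g1 g2 (\<sigma>2 \<circ> inv_into {1..M} \<sigma>1) (s \<circ> \<tau> \<circ> inv_into {1..M} \<sigma>1)"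
proof -
  let ?A = "{1..M}" and ?\<iota> = "inv_into {1..M} \<sigma>1"
  have \<sigma>1_bij: "bij_betw \<sigma>1 ?A ?A" and \<tau>_bij: "bij_betw \<tau> ?A ?A"
    using \<sigma>1 \<tau> by (simp_all add: decreasing_ranking_def)
  have \<iota>_\<sigma>1: "?\<iota> (\<sigma>1 i) = i" if "i \<in> ?A" for i
    using \<sigma>1_bij that by (simp add: bij_betw_inv_into_left)
  have "(\<Sum>n\<in>?A. s (\<tau> (?\<iota> n)) / (PS * g1 n)) = (\<Sum>i\<in>?A. s (\<tau> (?\<iota> (\<sigma>1 i))) / (PS * g1 (\<sigma>1 i)))"
    by (rule sum.reindex_bij_betw[OF \<sigma>1_bij, symmetric])
  also have "\<dots> = (\<Sum>i\<in>?A. s (\<tau> i) / (PS * g1 (\<sigma>1 i)))"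
    using \<iota>_\<sigma>1 by simp
  also have "\<dots> \<le> (\<Sum>n\<in>?A. s n / (PS * g1 (id n)))"
    using PS g1_pos by (intro sorted_assignment_cost_le decreasing_ranking_scale[OF \<sigma>1] \<tau>) (auto simp: bij_betw_def)
  also have "\<dots> \<le> 1"
    using s by (simp add: snr_feasible_def)
  finally have hop1: "(\<Sum>n\<in>?A. s (\<tau> (?\<iota> n)) / (PS * g1 n)) \<le> 1" .
  have "(\<Sum>n\<in>?A. s (\<tau> (?\<iota> n)) / (PR * g2 (\<sigma>2 (?\<iota> n))))
      = (\<Sum>i\<in>?A. s (\<tau> (?\<iota> (\<sigma>1 i))) / (PR * g2 (\<sigma>2 (?\<iota> (\<sigma>1 i)))))"
    by (rule sum.reindex_bij_betw[OF \<sigma>1_bij, symmetric])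
  also have "\<dots> = (\<Sum>i\<in>?A. s (\<tau> i) / (PR * g2 (\<sigma>2 i)))"
    using \<iota>_\<sigma>1 by simp
  also have "\<dots> \<le> (\<Sum>n\<in>?A. s n / (PR * g2 (\<pi> n)))"
    using PR g2_pos \<pi>_bij by (intro sorted_assignment_cost_le decreasing_ranking_scale[OF \<sigma>2] \<tau>) auto
  also have "\<dots> \<le> 1"
    using s by (simp add: snr_feasible_def)
  finally have hop2: "(\<Sum>n\<in>?A. s (\<tau> (?\<iota> n)) / (PR * g2 (\<sigma>2 (?\<iota> n)))) \<le> 1" .
  have "\<forall>n\<in>?A. 0 \<le> s (\<tau> (?\<iota> n))"
    using s bij_betwE[OF \<tau>_bij] bij_betwE[OF bij_betw_inv_into[OF \<sigma>1_bij]]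
    by (auto simp: snr_feasible_def)
  then show ?thesis
    using hop1 hop2 by (simp add: snr_feasible_def)
qed

lemma bij_betw_ranking_match:
  assumes "bij_betw \<sigma>1 A A" and "bij_betw \<sigma>2 A A"
  shows "bij_betw (\<sigma>2 \<circ> inv_into A \<sigma>1) A A"
  by (rule bij_betw_trans[OF bij_betw_inv_into[OF assms(1)] assms(2)])

lemma sorted_pairing_pairing_of:
  assumes \<sigma>1: "decreasing_ranking M g1 \<sigma>1" and \<sigma>2: "decreasing_ranking M g2 \<sigma>2"
  shows "sorted_pairing M g1 g2 (pairing_of (\<sigma>2 \<circ> inv_into {1..M} \<sigma>1))"
proof -
  have "bij_betw \<sigma>1 {1..M} {1..M}"
    using \<sigma>1 by (simp add: decreasing_ranking_def)
  then have "\<forall>i\<in>{1..M}. pairing_of (\<sigma>2 \<circ> inv_into {1..M} \<sigma>1) (\<sigma>1 i) (\<sigma>2 i) = 1"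
    by (simp add: pairing_of_def bij_betw_inv_into_left)
  then show ?thesis
    unfolding sorted_pairing_def using \<sigma>1 \<sigma>2 by blast
qed

lemma feasible_pairing_of:
  assumes "bij_betw \<pi> {1..M} {1..M}" and "\<mu> \<in> allocations M" and "\<mu>b \<in> allocations M"
  shows "feasible M (pairing_of \<pi>) \<mu> \<mu>b"
  using assms pairing_of_column_sum[OF _ assms(1)] bij_betwE[OF assms(1)]
  by (auto simp: feasible_def allocations_def pairing_of_def)

lemma sorted_pairing_dominates:
  assumes \<sigma>1: "decreasing_ranking M g1 \<sigma>1" and \<sigma>2: "decreasing_ranking M g2 \<sigma>2"
    and feas: "feasible M \<theta> \<mu> \<mu>b" and PS: "PS > 0" and PR: "PR > 0"
    and g1_pos: "\<forall>n\<in>{1..M}. g1 n > 0" and g2_pos: "\<forall>n\<in>{1..M}. g2 n > 0"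
  obtains \<mu>' \<mu>b' where "\<mu>' \<in> allocations M" and "\<mu>b' \<in> allocations M"
    and "objective M c PS PR g1 g2 \<theta> \<mu> \<mu>b =
         objective M c PS PR g1 g2 (pairing_of (\<sigma>2 \<circ> inv_into {1..M} \<sigma>1)) \<mu>' \<mu>b'"
proof -
  let ?A = "{1..M}" and ?\<iota> = "inv_into {1..M} \<sigma>1"
  obtain \<pi> s where \<pi>_bij: "bij_betw \<pi> ?A ?A" and s: "snr_feasible M PS PR g1 g2 \<pi> s"
    and obj: "objective M c PS PR g1 g2 \<theta> \<mu> \<mu>b = (\<Sum>n\<in>?A. c * log 2 (1 + s n))"
    using feasible_imp_snr_feasible[OF feas PS PR g1_pos g2_pos] .
  obtain \<tau> where \<tau>: "decreasing_ranking M s \<tau>"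
    using decreasing_ranking_exists by blast
  have \<sigma>1_bij: "bij_betw \<sigma>1 ?A ?A" and \<sigma>2_bij: "bij_betw \<sigma>2 ?A ?A" and \<tau>_bij: "bij_betw \<tau> ?A ?A"
    using \<sigma>1 \<sigma>2 \<tau> by (simp_all add: decreasing_ranking_def)
  obtain \<mu>' \<mu>b' where "\<mu>' \<in> allocations M" "\<mu>b' \<in> allocations M"
    and "objective M c PS PR g1 g2 (pairing_of (\<sigma>2 \<circ> ?\<iota>)) \<mu>' \<mu>b'
           = (\<Sum>n\<in>?A. c * log 2 (1 + (s \<circ> \<tau> \<circ> ?\<iota>) n))"
    using snr_feasible_imp_allocation[OF bij_betw_ranking_match[OF \<sigma>1_bij \<sigma>2_bij]
        snr_feasible_sorted_pairing[OF \<sigma>1 \<sigma>2 \<tau> \<pi>_bij s PS PR g1_pos g2_pos] PS PR g1_pos g2_pos] .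
  moreover have "(\<Sum>n\<in>?A. c * log 2 (1 + (s \<circ> \<tau> \<circ> ?\<iota>) n)) = (\<Sum>n\<in>?A. c * log 2 (1 + s n))"
    using sum.reindex_bij_betw[OF bij_betw_ranking_match[OF \<sigma>1_bij \<tau>_bij]] by (simp add: comp_assoc)
  ultimately show ?thesis
    using that obj by simp
qed

theorem theorem1:
  fixes M :: nat and PS PR c :: real and g1 g2 :: "nat \<Rightarrow> real"
  assumes "M \<ge> 1" and "PS > 0" and "PR > 0" and "c > 0"
    and "\<forall>n\<in>{1..M}. g1 n > 0" and "\<forall>n\<in>{1..M}. g2 n > 0"
  shows "\<exists>\<theta> \<mu> \<mu>b. optimal M c PS PR g1 g2 \<theta> \<mu> \<mu>b \<and> sorted_pairing M g1 g2 \<theta>"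
proof -
  obtain \<sigma>1 \<sigma>2 where \<sigma>1: "decreasing_ranking M g1 \<sigma>1" and \<sigma>2: "decreasing_ranking M g2 \<sigma>2"
    using decreasing_ranking_exists by metis
  define p where "p = \<sigma>2 \<circ> inv_into {1..M} \<sigma>1"
  have p_bij: "bij_betw p {1..M} {1..M}"
    using \<sigma>1 \<sigma>2 unfolding p_def decreasing_ranking_def by (blast intro: bij_betw_ranking_match)
  obtain \<mu> \<mu>b where alloc: "\<mu> \<in> allocations M" "\<mu>b \<in> allocations M"
    and max: "\<And>\<mu>' \<mu>b'. \<mu>' \<in> allocations M \<Longrightarrow> \<mu>b' \<in> allocations M \<Longrightarrow>
       objective M c PS PR g1 g2 (pairing_of p) \<mu>' \<mu>b' \<le> objective M c PS PR g1 g2 (pairing_of p) \<mu> \<mu>b"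
    using optimal_allocation_exists[OF assms(2,3,5,6)] by blast
  have "objective M c PS PR g1 g2 \<theta>' \<mu>' \<mu>b' \<le> objective M c PS PR g1 g2 (pairing_of p) \<mu> \<mu>b"
    if "feasible M \<theta>' \<mu>' \<mu>b'" for \<theta>' \<mu>' \<mu>b'
    using sorted_pairing_dominates[OF \<sigma>1 \<sigma>2 that assms(2,3,5,6)] max unfolding p_def by metis
  then have "optimal M c PS PR g1 g2 (pairing_of p) \<mu> \<mu>b"
    unfolding optimal_def using feasible_pairing_of[OF p_bij alloc] by blast
  then show ?thesis
    using sorted_pairing_pairing_of[OF \<sigma>1 \<sigma>2] unfolding p_def by blast
qed

end
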